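(* Let $0<q<1/2$, $p=1-q$, $\lambda=q/p$. For each integer $z\ge2$ let $\kappa(z)$ be the unique $\kappa\in(0,+\infty)$ satisfying $$\sum_{j=1}^{z-1}\left(\prod_{i=1}^{j}\left(1-\frac iz\right)\right)\frac{1}{\kappa^j}=\frac{\lambda}{1-\lambda}.$$ Then as $z\to+\infty$, $$\kappa(z)=\frac pq-\frac{p^2}{q(p-q)}\,\frac1z+o(z^{-1}).$$
   Context: The left-hand side is strictly decreasing in $\kappa$ from $+\infty$ to $0$, so $\kappa(z)$ is well defined. *)

theory Defs
  imports "HOL-Analysis.Analysis" "HOL-Library.Landau_Symbols"
begin

definition kappa_lhs :: "nat \<Rightarrow> real \<Rightarrow> real" where
  "kappa_lhs z k = (\<Sum>j=1..z-1. (\<Prod>i=1..j. 1 - real i / real z) * (1 / k ^ j))"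

definition kappa :: "real \<Rightarrow> nat \<Rightarrow> real" where
  "kappa lam z = (THE k. k > 0 \<and> kappa_lhs z k = lam / (1 - lam))"

end

theory Submission
  imports Defs
begin

text \<open>
  With \<open>x = 1/k\<close>, the coefficients \<open>a\<^sub>j = \<Prod>i\<le>j. 1 - i/z\<close> satisfy the Bonferroni-type bounds
  \<open>1 - s\<^sub>j \<le> a\<^sub>j \<le> 1 - s\<^sub>j + s\<^sub>j\<^sup>2/2\<close> with \<open>s\<^sub>j = j(j+1)/(2z)\<close>; summing them against \<open>x\<^sup>j\<close>
  gives \<open>L\<^sub>z(k) = 1/(k-1) - k\<^sup>2/(z(k-1)\<^sup>3) + O(1/z\<^sup>2)\<close>, uniformly for \<open>k\<close> bounded away from 1.
  At \<open>k = r - D/z\<close> with \<open>r = p/q\<close> the main term is \<open>1/(r-1) + (D - C)/((r-1)\<^sup>2 z) + o(1/z)\<close>,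
  where \<open>C = r\<^sup>2/(r-1)\<close> and \<open>1/(r-1) = \<lambda>/(1-\<lambda>)\<close>. So for \<open>D = C \<plusminus> \<epsilon>\<close> the left-hand side
  eventually lies on opposite sides of \<open>\<lambda>/(1-\<lambda>)\<close>, and monotonicity in \<open>k\<close> traps \<open>\<kappa>(z)\<close>
  between \<open>r - (C + \<epsilon>)/z\<close> and \<open>r - (C - \<epsilon>)/z\<close>.
\<close>

lemma geometric_second_deriv_sums:
  fixes z :: "'a :: {real_normed_field,banach}"
  assumes "norm z < 1"
  shows "(\<lambda>n. of_nat (Suc n) * of_nat (Suc (Suc n)) * z ^ n) sums (2 / (1 - z)^3)"
proof -
  have "(\<lambda>n. diffs (\<lambda>n. of_nat (Suc n)) n * z ^ n) sums (2 / (1 - z)^3)"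
  proof (rule termdiffs_sums_strong)
    fix z :: 'a assume "norm z < 1"
    then show "(\<lambda>n. of_nat (Suc n) * z ^ n) sums (1 / (1 - z)^2)"
      by (rule geometric_deriv_sums)
  next
    have "1 - z \<noteq> 0" using assms by auto
    then show "((\<lambda>z. 1 / (1 - z)^2) has_field_derivative 2 / (1 - z)^3) (at z)"
      by (auto intro!: derivative_eq_intros simp: divide_simps power3_eq_cube power2_eq_square)
  qed (use assms in simp)
  then show ?thesis unfolding diffs_def by (simp add: mult.commute)
qed

lemma sums_of_nat_mult_Suc_power:
  fixes x :: real
  assumes "\<bar>x\<bar> < 1"
  shows "(\<lambda>n. real n * (real n + 1) * x ^ n) sums (2 * x / (1 - x)^3)"
proof -
  have "(\<lambda>n. x * (real (Suc n) * real (Suc (Suc n)) * x ^ n)) sums (x * (2 / (1 - x)^3))"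
    using geometric_second_deriv_sums[of x] assms by (intro sums_mult) simp
  then have "(\<lambda>n. real (Suc n) * (real (Suc n) + 1) * x ^ Suc n) sums (2 * x / (1 - x)^3)"
    by (simp add: algebra_simps)
  then show ?thesis
    using sums_Suc_iff[of "\<lambda>n. real n * (real n + 1) * x ^ n"] by simp
qed

lemma summable_real_power_mult_power:
  fixes x :: real
  assumes "\<bar>x\<bar> < 1"
  shows "summable (\<lambda>n. real n ^ m * x ^ n)"
  using assms
proof (induction m arbitrary: x)
  case 0
  then show ?case by (simp add: summable_geometric)
next
  case (Suc m)
  have "summable (\<lambda>n. diffs (\<lambda>n. real n ^ m) n * \<bar>x\<bar> ^ n)"
    by (rule termdiff_converges[where K=1]) (use Suc in auto)
  then have "summable (\<lambda>n. real (Suc n) ^ Suc m * \<bar>x\<bar> ^ n)"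
    by (simp add: diffs_def)
  then show ?case
  proof (rule summable_comparison_test')
    fix n :: nat
    have "real n ^ Suc m \<le> real (Suc n) ^ Suc m"
      by (rule power_mono) auto
    then show "norm (real n ^ Suc m * x ^ n) \<le> real (Suc n) ^ Suc m * \<bar>x\<bar> ^ n"
      by (simp add: abs_mult power_abs mult_right_mono del: of_nat_Suc)
  qed
qed

lemma prod_one_minus_ge_one_minus_sum:
  fixes t :: "'a \<Rightarrow> real"
  assumes "finite I" "\<And>i. i \<in> I \<Longrightarrow> 0 \<le> t i \<and> t i \<le> 1"
  shows "1 - sum t I \<le> (\<Prod>i\<in>I. 1 - t i)"
  using assms
proof (induction I rule: finite_induct)
  case (insert i I)
  let ?S = "sum t I" and ?P = "\<Prod>i\<in>I. 1 - t i"
  have t: "0 \<le> t i" "t i \<le> 1" "0 \<le> ?S" using insert.prems by (auto intro: sum_nonneg)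
  have "1 - (t i + ?S) \<le> (1 - t i) * (1 - ?S)" using t by (simp add: algebra_simps)
  also have "\<dots> \<le> (1 - t i) * ?P" using insert t by (intro mult_left_mono) auto
  finally show ?case using insert by simp
qed simp

lemma prod_one_minus_le:
  fixes t :: "'a \<Rightarrow> real"
  assumes "finite I" "\<And>i. i \<in> I \<Longrightarrow> 0 \<le> t i \<and> t i \<le> 1"
  shows "(\<Prod>i\<in>I. 1 - t i) \<le> 1 - sum t I + (sum t I)^2 / 2"
  using assms
proof (induction I rule: finite_induct)
  case (insert i I)
  let ?S = "sum t I" and ?P = "\<Prod>i\<in>I. 1 - t i"
  have t: "0 \<le> t i" "t i \<le> 1" "0 \<le> ?S" using insert.prems by (auto intro: sum_nonneg)
  have "(1 - t i) * ?P \<le> (1 - t i) * (1 - ?S + ?S^2 / 2)" using insert t by (intro mult_left_mono) auto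
  also have "\<dots> = 1 - (t i + ?S) + (t i + ?S)^2 / 2 - (t i^2 / 2 + ?S^2 * t i / 2)"
    by (simp add: power2_eq_square algebra_simps add_divide_distrib diff_divide_distrib)
  also have "\<dots> \<le> 1 - (t i + ?S) + (t i + ?S)^2 / 2"
    using t by simp (meson mult_nonneg_nonneg neg_le_0_iff_le order_trans zero_le_power2)
  finally show ?case using insert by simp
qed simp

definition kappa_coeff :: "nat \<Rightarrow> nat \<Rightarrow> real" where
  "kappa_coeff z j = (\<Prod>i=1..j. 1 - real i / real z)"

lemma kappa_coeff_eq_0: "1 \<le> z \<Longrightarrow> z \<le> j \<Longrightarrow> kappa_coeff z j = 0"
  unfolding kappa_coeff_def by (intro prod_zero) (auto intro!: bexI[of _ z])

lemma kappa_coeff_bounds: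
  fixes z j :: nat
  assumes "1 \<le> z"
  defines "s \<equiv> real j * (real j + 1) / (2 * real z)"
  shows "1 - s \<le> kappa_coeff z j" and "kappa_coeff z j \<le> 1 - s + s^2 / 2"
proof -
  have "1 - s \<le> kappa_coeff z j \<and> kappa_coeff z j \<le> 1 - s + s^2 / 2"
  proof (cases "j \<le> z")
    case True
    have gauss: "(\<Sum>i=1..j. real i) = real j * (real j + 1) / 2"
      using double_gauss_sum_from_Suc_0[of j, where ?'a = real] by simp
    have "s = (\<Sum>i=1..j. real i / real z)"
      unfolding s_def sum_divide_distrib[symmetric] gauss by simp
    moreover have "0 \<le> real i / real z \<and> real i / real z \<le> 1" if "i \<in> {1..j}" for i
      using that True by auto
    ultimately show ?thesis
      unfolding kappa_coeff_def
      using prod_one_minus_ge_one_minus_sum prod_one_minus_le by (metis finite_atLeastAtMost)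
  next
    case False
    have "2 * real z \<le> real j * (real j + 1)"
      using False assms by (simp add: power2_eq_square) (intro mult_mono; simp)
    then have "1 \<le> s" using assms unfolding s_def by simp
    moreover have "0 \<le> ((s - 1)^2 + 1) / 2" by simp
    ultimately show ?thesis
      using kappa_coeff_eq_0[OF assms(1)] False by (simp add: power2_eq_square algebra_simps)
  qed
  then show "1 - s \<le> kappa_coeff z j" and "kappa_coeff z j \<le> 1 - s + s^2 / 2" by auto
qed

definition kappa_lhs_approx :: "nat \<Rightarrow> real \<Rightarrow> real" where
  "kappa_lhs_approx z k = 1 / (k - 1) - k^2 / (real z * (k - 1)^3)"

lemma kappa_lhs_sums:
  assumes "1 \<le> z"
  shows "(\<lambda>j. kappa_coeff z j * (1 / k) ^ j) sums (kappa_lhs z k + 1)"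
proof -
  have "(\<lambda>j. kappa_coeff z j * (1 / k) ^ j) sums (\<Sum>j=0..z-1. kappa_coeff z j * (1 / k) ^ j)"
    by (rule sums_finite) (use assms kappa_coeff_eq_0 in auto)
  also have "(\<Sum>j=0..z-1. kappa_coeff z j * (1 / k) ^ j) = kappa_lhs z k + 1"
    unfolding kappa_lhs_def
    by (simp add: sum.atLeast_Suc_atMost kappa_coeff_def power_one_over)
  finally show ?thesis .
qed

lemma sums_kappa_lhs_approx:
  assumes "1 \<le> z" "1 < k"
  shows "(\<lambda>j. (1 - real j * (real j + 1) / (2 * real z)) * (1 / k) ^ j) sums (kappa_lhs_approx z k + 1)"
proof -
  define x where "x = 1 / k"
  have x: "\<bar>x\<bar> < 1" using assms by (simp add: x_def)
  have "(\<lambda>j. x ^ j - 1 / (2 * real z) * (real j * (real j + 1) * x ^ j))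
          sums (1 / (1 - x) - 1 / (2 * real z) * (2 * x / (1 - x)^3))"
    using x by (intro sums_diff sums_mult geometric_sums sums_of_nat_mult_Suc_power) auto
  moreover have "1 / (1 - x) - 1 / (2 * real z) * (2 * x / (1 - x)^3) = kappa_lhs_approx z k + 1"
    using assms unfolding x_def kappa_lhs_approx_def
    by (simp add: field_simps power2_eq_square power3_eq_cube)
  moreover have "(\<lambda>j. x ^ j - 1 / (2 * real z) * (real j * (real j + 1) * x ^ j))
      = (\<lambda>j. (1 - real j * (real j + 1) / (2 * real z)) * x ^ j)"
    by (simp add: fun_eq_iff algebra_simps add_divide_distrib)
  ultimately show ?thesis
    unfolding x_def by simp
qed

lemma kappa_lhs_approx_le:
  assumes "1 \<le> z" "1 < k"
  shows "kappa_lhs_approx z k \<le> kappa_lhs z k"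
proof -
  have "kappa_lhs_approx z k + 1 \<le> kappa_lhs z k + 1"
  proof (rule sums_le[OF _ sums_kappa_lhs_approx[OF assms] kappa_lhs_sums[OF assms(1)]])
    show "(1 - real j * (real j + 1) / (2 * real z)) * (1 / k) ^ j \<le> kappa_coeff z j * (1 / k) ^ j" for j
      using kappa_coeff_bounds(1)[OF assms(1)] assms by (intro mult_right_mono) auto
  qed
  then show ?thesis by simp
qed

lemma kappa_lhs_le_approx:
  assumes "1 < k0"
  obtains M where "\<And>(z::nat) k. 1 \<le> z \<Longrightarrow> k0 \<le> k \<Longrightarrow> kappa_lhs z k \<le> kappa_lhs_approx z k + M / real z ^ 2"
proof
  define x0 where "x0 = 1 / k0"
  have x0: "0 < x0" "x0 < 1" using assms by (auto simp: x0_def)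
  define w where "w = (\<lambda>j. (real j * (real j + 1))^2 * x0 ^ j)"
  have "summable (\<lambda>j. real j ^ 4 * x0 ^ j + 2 * (real j ^ 3 * x0 ^ j) + real j ^ 2 * x0 ^ j)"
    using x0 by (intro summable_add summable_mult summable_real_power_mult_power) auto
  then have "summable w"
    unfolding w_def by (simp add: algebra_simps power2_eq_square power3_eq_cube power4_eq_xxxx)
  fix z :: nat and k :: real
  assume z: "1 \<le> z" and k: "k0 \<le> k"
  define s where "s = (\<lambda>j. real j * (real j + 1) / (2 * real z))"
  have "0 < real z" "0 < k" "1 < k" using z k assms by auto
  have majorant: "(\<lambda>j. (1 - s j) * (1 / k) ^ j + 1 / (8 * real z ^ 2) * w j)
          sums (kappa_lhs_approx z k + 1 + 1 / (8 * real z ^ 2) * suminf w)"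
    unfolding s_def using \<open>1 < k\<close>
    by (intro sums_add sums_kappa_lhs_approx[OF z] sums_mult summable_sums[OF \<open>summable w\<close>])
  have termwise: "kappa_coeff z j * (1 / k) ^ j \<le> (1 - s j) * (1 / k) ^ j + 1 / (8 * real z ^ 2) * w j" for j
  proof -
    have "kappa_coeff z j * (1 / k) ^ j \<le> (1 - s j + (s j)^2 / 2) * (1 / k) ^ j"
      using kappa_coeff_bounds(2)[OF z] \<open>0 < k\<close> by (intro mult_right_mono) (auto simp: s_def)
    also have "\<dots> = (1 - s j) * (1 / k) ^ j + 1 / (8 * real z ^ 2) * ((real j * (real j + 1))^2 * (1 / k) ^ j)"
      using \<open>0 < real z\<close> \<open>0 < k\<close> by (simp add: s_def field_simps power2_eq_square)
    also have "\<dots> \<le> (1 - s j) * (1 / k) ^ j + 1 / (8 * real z ^ 2) * w j"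
      unfolding w_def x0_def using assms k
      by (intro add_left_mono mult_left_mono power_mono divide_left_mono) auto
    finally show ?thesis .
  qed
  have "kappa_lhs z k + 1 \<le> kappa_lhs_approx z k + 1 + 1 / (8 * real z ^ 2) * suminf w"
    using sums_le[OF termwise kappa_lhs_sums[OF z] majorant] .
  then show "kappa_lhs z k \<le> kappa_lhs_approx z k + suminf w / 8 / real z ^ 2"
    by simp
qed

lemma kappa_lhs_strict_antimono:
  assumes "2 \<le> z" "0 < k1" "k1 < k2"
  shows "kappa_lhs z k2 < kappa_lhs z k1"
  unfolding kappa_lhs_def
proof (rule sum_strict_mono_ex1)
  show "\<forall>j\<in>{1..z-1}. (\<Prod>i=1..j. 1 - real i / real z) * (1 / k2 ^ j)
                      \<le> (\<Prod>i=1..j. 1 - real i / real z) * (1 / k1 ^ j)"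
  proof
    fix j assume j: "j \<in> {1..z-1}"
    show "(\<Prod>i=1..j. 1 - real i / real z) * (1 / k2 ^ j) \<le> (\<Prod>i=1..j. 1 - real i / real z) * (1 / k1 ^ j)"
    proof (rule mult_left_mono)
      show "1 / k2 ^ j \<le> 1 / k1 ^ j"
        using assms by (intro divide_left_mono power_mono mult_pos_pos) auto
      show "0 \<le> (\<Prod>i=1..j. 1 - real i / real z)"
        using j assms by (intro prod_nonneg) (auto simp: field_simps)
    qed
  qed
  have "(1 - 1 / real z) * (1 / k2) < (1 - 1 / real z) * (1 / k1)"
    using assms by (intro mult_strict_left_mono) (auto simp: field_simps)
  then show "\<exists>j\<in>{1..z-1}. (\<Prod>i=1..j. 1 - real i / real z) * (1 / k2 ^ j)
                          < (\<Prod>i=1..j. 1 - real i / real z) * (1 / k1 ^ j)"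
    using assms by (intro bexI[of _ 1]) auto
qed simp

lemma continuous_on_kappa_lhs: "0 < a \<Longrightarrow> continuous_on {a..b} (kappa_lhs z)"
  unfolding kappa_lhs_def by (intro continuous_intros) auto

lemma kappa_eqI:
  assumes "2 \<le> z" "0 < k" "kappa_lhs z k = lam / (1 - lam)"
  shows "kappa lam z = k"
  unfolding kappa_def
proof (rule the_equality)
  show "0 < k \<and> kappa_lhs z k = lam / (1 - lam)" using assms by simp
  fix k' assume k': "0 < k' \<and> kappa_lhs z k' = lam / (1 - lam)"
  show "k' = k"
  proof (rule linorder_cases[of k' k])
    assume "k' < k"
    then show ?thesis using kappa_lhs_strict_antimono[OF assms(1)] k' assms by fastforce
  next
    assume "k < k'"
    then show ?thesis using kappa_lhs_strict_antimono[OF assms(1)] k' assms by fastforce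
  qed
qed

lemma kappa_between:
  assumes "2 \<le> z" "0 < k1" "k1 \<le> k2"
    and "kappa_lhs z k2 < lam / (1 - lam)" "lam / (1 - lam) < kappa_lhs z k1"
  shows "k1 \<le> kappa lam z \<and> kappa lam z \<le> k2"
proof -
  obtain k where k: "k1 \<le> k" "k \<le> k2" "kappa_lhs z k = lam / (1 - lam)"
    using IVT2'[OF less_imp_le[OF assms(4)] less_imp_le[OF assms(5)] assms(3)
        continuous_on_kappa_lhs[OF assms(2)]] by blast
  then have "kappa lam z = k" using assms by (intro kappa_eqI) auto
  with k show ?thesis by simp
qed

lemma tendsto_const_minus_divide_real:
  "((\<lambda>z. r - D / real z) \<longlongrightarrow> r) sequentially"
proof -
  have "((\<lambda>z. D / real z) \<longlongrightarrow> 0) sequentially"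
    using tendsto_mult_right_zero[OF lim_inverse_n', of D] by simp
  then show ?thesis
    using tendsto_diff[OF tendsto_const, of _ 0 sequentially r] by simp
qed

lemma tendsto_kappa_lhs_approx:
  assumes "1 < r"
  shows "((\<lambda>z. real z * (kappa_lhs_approx z (r - D / real z) - 1 / (r - 1)))
           \<longlongrightarrow> (D - r^2 / (r - 1)) / (r - 1)^2) sequentially"
proof -
  define k where "k = (\<lambda>z. r - D / real z)"
  have lim_k: "(k \<longlongrightarrow> r) sequentially"
    unfolding k_def by (rule tendsto_const_minus_divide_real)
  have "((\<lambda>z. D / ((k z - 1) * (r - 1)) - k z ^ 2 / (k z - 1)^3)
          \<longlongrightarrow> D / ((r - 1) * (r - 1)) - r^2 / (r - 1)^3) sequentially"
    using assms by (intro tendsto_intros lim_k) auto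
  moreover have "D / ((r - 1) * (r - 1)) - r^2 / (r - 1)^3 = (D - r^2 / (r - 1)) / (r - 1)^2"
    using assms by (simp add: diff_divide_distrib power2_eq_square power3_eq_cube)
  moreover have "eventually (\<lambda>z. D / ((k z - 1) * (r - 1)) - k z ^ 2 / (k z - 1)^3
      = real z * (kappa_lhs_approx z (k z) - 1 / (r - 1))) sequentially"
    using order_tendstoD(1)[OF lim_k assms] eventually_gt_at_top[of 0]
  proof eventually_elim
    case (elim z)
    define t where "t = k z"
    have nz: "t - 1 \<noteq> 0" "r - 1 \<noteq> 0" "real z \<noteq> 0" using elim assms by (auto simp: t_def)
    have "D = real z * (r - t)" using elim by (simp add: t_def k_def)
    then have "real z * (1 / (t - 1) - 1 / (r - 1)) = D / ((t - 1) * (r - 1))"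
      using nz by (simp add: field_simps)
    moreover have "real z * (t^2 / (real z * (t - 1)^3)) = t^2 / (t - 1)^3" using nz by simp
    ultimately show ?case
      unfolding t_def[symmetric] kappa_lhs_approx_def by (simp add: algebra_simps)
  qed
  ultimately show ?thesis unfolding k_def by (simp add: tendsto_cong)
qed

lemma eventually_kappa_lhs_gt:
  assumes "1 < r" "r^2 / (r - 1) < D"
  shows "eventually (\<lambda>z. 1 < r - D / real z \<and> 1 / (r - 1) < kappa_lhs z (r - D / real z)) sequentially"
proof -
  have "eventually (\<lambda>z. 0 < real z * (kappa_lhs_approx z (r - D / real z) - 1 / (r - 1))) sequentially"
    using order_tendstoD(1)[OF tendsto_kappa_lhs_approx[OF assms(1)], of 0] assms by simp
  moreover have "eventually (\<lambda>z. 1 < r - D / real z) sequentially"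
    using order_tendstoD(1)[OF tendsto_const_minus_divide_real assms(1)] .
  moreover have "eventually (\<lambda>z. 1 \<le> z) sequentially" by (rule eventually_ge_at_top)
  ultimately show ?thesis
  proof eventually_elim
    case (elim z)
    then have "1 / (r - 1) < kappa_lhs_approx z (r - D / real z)"
      by (simp add: zero_less_mult_iff)
    then show ?case using kappa_lhs_approx_le[of z "r - D / real z"] elim by simp
  qed
qed

lemma eventually_kappa_lhs_lt:
  assumes "1 < r" "D < r^2 / (r - 1)"
  shows "eventually (\<lambda>z. kappa_lhs z (r - D / real z) < 1 / (r - 1)) sequentially"
proof -
  obtain M where M: "\<And>z k. 1 \<le> z \<Longrightarrow> (1 + r) / 2 \<le> k \<Longrightarrow> kappa_lhs z k \<le> kappa_lhs_approx z k + M / real z ^ 2"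
    using kappa_lhs_le_approx[of "(1 + r) / 2"] assms by auto
  have "((\<lambda>z. real z * (kappa_lhs_approx z (r - D / real z) - 1 / (r - 1)) + M * (1 / real z))
          \<longlongrightarrow> (D - r^2 / (r - 1)) / (r - 1)^2 + M * 0) sequentially"
    by (intro tendsto_intros tendsto_kappa_lhs_approx assms lim_inverse_n')
  moreover have "(D - r^2 / (r - 1)) / (r - 1)^2 + M * 0 < 0"
    using assms by (simp add: divide_neg_pos)
  ultimately have "eventually (\<lambda>z. real z * (kappa_lhs_approx z (r - D / real z) - 1 / (r - 1)) + M * (1 / real z) < 0) sequentially"
    using order_tendstoD(2) by blast
  moreover have "eventually (\<lambda>z. (1 + r) / 2 < r - D / real z) sequentially"
    using order_tendstoD(1)[OF tendsto_const_minus_divide_real, of "(1 + r) / 2" r D] assms by simp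
  moreover have "eventually (\<lambda>z. 1 \<le> z) sequentially" by (rule eventually_ge_at_top)
  ultimately show ?thesis
  proof eventually_elim
    case (elim z)
    then have "real z * (kappa_lhs_approx z (r - D / real z) + M / real z ^ 2 - 1 / (r - 1)) < 0"
      by (simp add: right_diff_distrib distrib_left power2_eq_square)
    then have "kappa_lhs_approx z (r - D / real z) + M / real z ^ 2 < 1 / (r - 1)"
      using elim by (simp add: mult_less_0_iff)
    then show ?case using M[of z "r - D / real z"] elim by simp
  qed
qed

lemma eventually_kappa_close:
  assumes "1 < r" "0 < eps"
  shows "eventually (\<lambda>z. \<bar>kappa (1 / r) z - (r - r^2 / (r - 1) / real z)\<bar> \<le> eps / real z) sequentially"
proof -
  define C where "C = r^2 / (r - 1)"
  have lam: "(1 / r) / (1 - 1 / r) = 1 / (r - 1)" using assms by (simp add: field_simps)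
  have "eventually (\<lambda>z. 1 < r - (C + eps) / real z \<and> 1 / (r - 1) < kappa_lhs z (r - (C + eps) / real z)) sequentially"
    using assms by (intro eventually_kappa_lhs_gt) (auto simp: C_def)
  moreover have "eventually (\<lambda>z. kappa_lhs z (r - (C - eps) / real z) < 1 / (r - 1)) sequentially"
    using assms by (intro eventually_kappa_lhs_lt) (auto simp: C_def)
  moreover have "eventually (\<lambda>z. 2 \<le> z) sequentially" by (rule eventually_ge_at_top)
  ultimately show ?thesis
  proof eventually_elim
    case (elim z)
    have "r - (C + eps) / real z \<le> r - (C - eps) / real z" using assms by (simp add: divide_right_mono)
    then have "r - (C + eps) / real z \<le> kappa (1 / r) z \<and> kappa (1 / r) z \<le> r - (C - eps) / real z"
      using elim by (intro kappa_between[where lam = "1 / r", unfolded lam]) auto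
    moreover have "(C + eps) / real z = C / real z + eps / real z" "(C - eps) / real z = C / real z - eps / real z"
      by (simp_all add: add_divide_distrib diff_divide_distrib)
    ultimately show ?case unfolding C_def[symmetric] by (simp add: abs_le_iff)
  qed
qed

lemma kappa_asymptotics:
  assumes "1 < r"
  shows "(\<lambda>z. kappa (1 / r) z - (r - r^2 / (r - 1) * (1 / real z))) \<in> o(\<lambda>z. 1 / real z)"
proof (rule landau_o.smallI)
  fix eps :: real assume "0 < eps"
  show "eventually (\<lambda>z. norm (kappa (1 / r) z - (r - r^2 / (r - 1) * (1 / real z))) \<le> eps * norm (1 / real z)) sequentially"
    using eventually_kappa_close[OF assms \<open>0 < eps\<close>] by eventually_elim simp
qed

theorem mainTheorem13:
  fixes q p lam :: real
  assumes "0 < q" and "q < 1/2" and "p = 1 - q" and "lam = q / p"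
  shows "(\<lambda>z::nat. kappa lam z - (p / q - p^2 / (q * (p - q)) * (1 / real z)))
           \<in> o[sequentially](\<lambda>z. 1 / real z)"
proof -
  have "1 < p / q" and "lam = 1 / (p / q)" and "(p / q)^2 / (p / q - 1) = p^2 / (q * (p - q))"
    using assms by (auto simp: field_simps power2_eq_square)
  then show ?thesis using kappa_asymptotics[of "p / q"] by simp
qed

end
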